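(* Fix integers $0\le d\le m$ and $\delta\in(0,1)$, $\chi>0$. There is $\varepsilon_0>0$ such that for all $0<\varepsilon<\varepsilon_0$ the following holds. Let $r>0$ with $2r^\delta<\varepsilon$, let $0<\eta\le p\le r/2$, let $F=D+H:B^m[r]\to\mathbb R^m$ satisfy (GT2)–(GT3), and let $G:B^d[p]\to\mathbb R^{m-d}$ be the representing function of an admissible graph in $\mathscr M^u_{p,\eta}$. Write $H=(h_1,h_2)$. Then $\Psi:B^d[p]\to\mathbb R^d$, $\Psi(v)=D_1v+h_1(v,G(v))$, is injective, $\Psi(B^d[p])\supset B^d[e^{\chi-\sqrt\varepsilon}p]$, and its inverse $\Phi:\Psi(B^d[p])\to B^d[p]$ satisfies: (1) $\|d\Phi\|_{C^0}<e^{-\chi+\varepsilon}$; (2) $\|\Phi(0)\|<2\varepsilon\eta e^{-\chi+\varepsilon}$; (3) $\|d\Phi\|_{C^\delta}<e^{-\chi+3\varepsilon}$.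
   Context: $\|\cdot\|$ is the Euclidean norm and operator norm; $B^n[r]$ is the ball of radius $r$ centred at $0$ in $\mathbb R^n$. For $h$ on a bounded open $U$: $\|h\|_{C^0}=\sup_U\|h\|$, ${\rm Hol}_\delta(h)=\sup_{x\ne y}\|h(x)-h(y)\|/\|x-y\|^\delta$, $\|h\|_{C^\delta}=\|h\|_{C^0}+{\rm Hol}_\delta(h)$, $\|h\|_{C^1}=\|h\|_{C^0}+\|dh\|_{C^0}$. An admissible ($u$-)graph in $\mathscr M^u_{p,\eta}$ is $\{(v,G(v)):v\in B^d[p]\}$ with $G:B^d[p]\to\mathbb R^{m-d}$ of class $C^{1+\delta}$ satisfying (AM1) $\|G(0)\|\le10^{-3}\eta$, (AM2) $\|dG_0\|\le\frac12\eta^\delta$, (AM3) $\|dG\|_{C^0}+{\rm Hol}_\delta(dG)\le\frac12$ (norms over $B^d[p]$). (GT2): $D={\rm diag}(D_1,D_2)$ with $D_1:\mathbb R^d\to\mathbb R^d$, $D_2:\mathbb R^{m-d}\to\mathbb R^{m-d}$ invertible linear, $\|D_1^{-1}\|<e^{-\chi}$, $\|D_2\|<e^{-\chi}$. (GT3): $H:B^m[r]\to\mathbb R^m$ is $C^{1+\delta}$ with (a) $\|H(0)\|<\varepsilon\eta$, (b) $\|dH\|_{C^0(B^m[t])}<\varepsilon t^\delta$ for every $t\in[\eta,2p]$, (c) ${\rm Hol}_\delta(dH)<\varepsilon$ on $B^m[r]$. No upper bound on $\|D_1\|$ or lower bound on $\|D_2\|$ is assumed. *)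

theory Defs
  imports "HOL-Analysis.Analysis"
begin

text \<open>Sup norm over a set S, valued in the extended nonnegative reals
  (so that unbounded functions get the value infinity).\<close>
definition c0_norm :: "'a set \<Rightarrow> ('a \<Rightarrow> 'c::real_normed_vector) \<Rightarrow> ennreal" where
  "c0_norm S f = (SUP x\<in>S. ennreal (norm (f x)))"

definition hol :: "real \<Rightarrow> 'a::real_normed_vector set \<Rightarrow> ('a \<Rightarrow> 'c::real_normed_vector) \<Rightarrow> ennreal" where
  "hol \<delta> S f = (SUP xy\<in>{(x, y). x \<in> S \<and> y \<in> S \<and> x \<noteq> y}.
      ennreal (norm (f (fst xy) - f (snd xy)) / norm (fst xy - snd xy) powr \<delta>))"

definition cdelta_norm :: "real \<Rightarrow> 'a::real_normed_vector set \<Rightarrow> ('a \<Rightarrow> 'c::real_normed_vector) \<Rightarrow> ennreal" where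
  "cdelta_norm \<delta> S f = c0_norm S f + hol \<delta> S f"

definition C1_holder :: "real \<Rightarrow> 'a::real_normed_vector set \<Rightarrow> ('a \<Rightarrow> 'c::real_normed_vector)
    \<Rightarrow> ('a \<Rightarrow> 'a \<Rightarrow>\<^sub>L 'c) \<Rightarrow> bool" where
  "C1_holder \<delta> S f f' \<longleftrightarrow>
     (\<forall>x\<in>S. (f has_derivative blinfun_apply (f' x)) (at x within S)) \<and>
     c0_norm S f' < \<infinity> \<and> hol \<delta> S f' < \<infinity>"

definition admissible_u :: "real \<Rightarrow> real \<Rightarrow> real \<Rightarrow> ('a::euclidean_space \<Rightarrow> 'b::euclidean_space)
    \<Rightarrow> ('a \<Rightarrow> 'a \<Rightarrow>\<^sub>L 'b) \<Rightarrow> bool" where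
  "admissible_u \<delta> p \<eta> G G' \<longleftrightarrow>
     C1_holder \<delta> (cball 0 p) G G' \<and>
     norm (G 0) \<le> 10 powr (-3) * \<eta> \<and>
     norm (G' 0) \<le> 1/2 * \<eta> powr \<delta> \<and>
     c0_norm (cball 0 p) G' + hol \<delta> (cball 0 p) G' \<le> ennreal (1/2)"

end

theory Submission
  imports Defs
begin

text \<open>
  Write \<open>\<Psi> = D\<^sub>1 + h\<close> with \<open>h(v) = h\<^sub>1(v, G v)\<close>. The graph of \<open>G\<close> over \<open>B[p]\<close> lies in
  \<open>B[2p]\<close>, where (GT3) and \<open>2r\<^sup>\<delta> < \<epsilon>\<close> give \<open>\<parallel>dH\<parallel> \<le> \<epsilon>\<^sup>2/2\<close>; so \<open>\<parallel>dh\<parallel> \<le> \<epsilon>\<^sup>2\<close> and \<open>dh\<close> is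
  \<open>(5\<epsilon>/2, \<delta>)\<close>-Hoelder. As \<open>D\<^sub>1\<close> expands by \<open>e\<^sup>\<chi>\<close>, \<open>\<Psi>\<close> expands distances by \<open>m = e\<^sup>\<chi> - \<epsilon>\<^sup>2\<close>: it is
  injective, its inverse \<open>\<Phi>\<close> is \<open>1/m\<close>-Lipschitz, and \<open>d\<Phi>(y) = (D\<^sub>1 + dh(\<Phi> y))\<^sup>-\<^sup>1\<close> has norm at
  most \<open>1/m\<close>. The resolvent identity bounds the Hoelder constant of \<open>d\<Phi>\<close> by \<open>(5\<epsilon>/2)/m\<^sup>2\<^sup>+\<^sup>\<delta>\<close>,
  and points of \<open>B[e\<^sup>\<chi>\<^sup>-\<^sup>\<surd>\<^sup>\<epsilon> p]\<close> are attained via the Banach fixed point theorem. The stated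
  constants then follow from elementary inequalities for \<open>\<epsilon> < min (1/100) \<chi>\<close>.
\<close>

section \<open>Bounds from \<open>C\<^sup>0\<close> and Hoelder norms\<close>

lemma c0_norm_le_imp_norm_le:
  "c0_norm S f \<le> ennreal b \<Longrightarrow> x \<in> S \<Longrightarrow> 0 \<le> b \<Longrightarrow> norm (f x) \<le> b"
  unfolding c0_norm_def by (metis SUP_le_iff ennreal_le_iff)

lemma c0_norm_less_imp_norm_less:
  "c0_norm S f < ennreal b \<Longrightarrow> x \<in> S \<Longrightarrow> norm (f x) < b"
  unfolding c0_norm_def
  by (metis SUP_upper ennreal_less_iff le_less_trans norm_ge_zero)

lemma c0_norm_leI: "(\<And>x. x \<in> S \<Longrightarrow> norm (f x) \<le> b) \<Longrightarrow> c0_norm S f \<le> ennreal b"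
  unfolding c0_norm_def by (intro SUP_least) (simp add: ennreal_leI)

lemma hol_le_imp_norm_diff_le:
  assumes "hol \<delta> S f \<le> ennreal b" "x \<in> S" "y \<in> S" "0 \<le> b"
  shows "norm (f x - f y) \<le> b * norm (x - y) powr \<delta>"
proof (cases "x = y")
  case False
  have "ennreal (norm (f x - f y) / norm (x - y) powr \<delta>) \<le> hol \<delta> S f"
    unfolding hol_def using assms False by (intro SUP_upper2[of "(x, y)"]) auto
  also have "\<dots> \<le> ennreal b" by fact
  finally have "norm (f x - f y) / norm (x - y) powr \<delta> \<le> b"
    using assms(4) ennreal_le_iff by blast
  with False show ?thesis by (simp add: divide_le_eq mult.commute)
qed (use assms in simp)

lemma hol_less_imp_norm_diff_le:
  assumes "hol \<delta> S f < ennreal b" "x \<in> S" "y \<in> S"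
  shows "norm (f x - f y) \<le> b * norm (x - y) powr \<delta>"
proof -
  have "0 < b" using assms(1) ennreal_less_zero_iff[of b] by (metis le_less_trans zero_le)
  then show ?thesis using hol_le_imp_norm_diff_le[OF less_imp_le[OF assms(1)] assms(2,3)] by simp
qed

lemma hol_leI:
  assumes "\<And>x y. x \<in> S \<Longrightarrow> y \<in> S \<Longrightarrow> x \<noteq> y \<Longrightarrow> norm (f x - f y) \<le> b * norm (x - y) powr \<delta>"
  shows "hol \<delta> S f \<le> ennreal b"
  unfolding hol_def
proof (intro SUP_least, clarsimp)
  fix x y assume "x \<in> S" "y \<in> S" "x \<noteq> y"
  then show "ennreal (norm (f x - f y) / norm (x - y) powr \<delta>) \<le> ennreal b"
    using assms[of x y] by (intro ennreal_leI) (simp add: divide_le_eq mult.commute)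
qed

section \<open>Inverses of linear and of Lipschitz-invertible maps\<close>

lemma has_derivative_inverse_within_lipschitz:
  fixes f :: "'a::real_normed_vector \<Rightarrow> 'b::real_normed_vector"
  assumes df: "(f has_derivative A) (at x within K)" and "x \<in> K"
    and B: "bounded_linear B" and BA: "\<And>u. B (A u) = u"
    and gf: "\<And>v. v \<in> K \<Longrightarrow> g (f v) = v"
    and "0 < M" and lip: "\<And>v w. v \<in> K \<Longrightarrow> w \<in> K \<Longrightarrow> norm (v - w) \<le> M * norm (f v - f w)"
  shows "(g has_derivative B) (at (f x) within f ` K)"
  unfolding has_derivative_within_alt
proof (intro conjI allI impI B)
  fix e :: real assume "e > 0"
  obtain NB where NB: "NB > 0" "\<And>z. norm (B z) \<le> norm z * NB"
    using bounded_linear.pos_bounded[OF B] by blast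
  define e' where "e' = e / (NB * M)"
  have "e' > 0" using \<open>e > 0\<close> \<open>M > 0\<close> NB by (simp add: e'_def)
  then obtain d where "d > 0"
    and d: "\<And>v. v \<in> K \<Longrightarrow> norm (v - x) < d \<Longrightarrow> norm (f v - f x - A (v - x)) \<le> e' * norm (v - x)"
    using df unfolding has_derivative_within_alt by meson
  show "\<exists>d>0. \<forall>y\<in>f ` K. norm (y - f x) < d \<longrightarrow> norm (g y - g (f x) - B (y - f x)) \<le> e * norm (y - f x)"
  proof (intro exI[of _ "d / M"] conjI ballI impI)
    show "d / M > 0" using \<open>d > 0\<close> \<open>M > 0\<close> by simp
    fix y assume "y \<in> f ` K" and yd: "norm (y - f x) < d / M"
    then obtain v where v: "v \<in> K" "y = f v" by auto
    have vx: "norm (v - x) \<le> M * norm (y - f x)" using lip[OF v(1) \<open>x \<in> K\<close>] v by simp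
    with yd \<open>M > 0\<close> have "norm (v - x) < d" by (simp add: less_divide_eq mult.commute)
    have "g y - g (f x) - B (y - f x) = - B (f v - f x - A (v - x))"
      using gf v \<open>x \<in> K\<close> BA has_derivative_linear[OF df]
      by (simp add: linear_diff[OF bounded_linear.linear[OF B]] linear_diff)
    then have "norm (g y - g (f x) - B (y - f x)) \<le> norm (f v - f x - A (v - x)) * NB"
      using NB(2) by simp
    also have "\<dots> \<le> e' * (M * norm (y - f x)) * NB"
    proof -
      have "norm (f v - f x - A (v - x)) \<le> e' * (M * norm (y - f x))"
        using d[OF v(1) \<open>norm (v - x) < d\<close>] mult_left_mono[OF vx, of e'] \<open>e' > 0\<close> by linarith
      with NB(1) show ?thesis by (simp add: mult_right_mono)
    qed
    also have "\<dots> = e * norm (y - f x)" using NB \<open>M > 0\<close> by (simp add: e'_def field_simps)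
    finally show "norm (g y - g (f x) - B (y - f x)) \<le> e * norm (y - f x)" .
  qed
qed

lemma norm_le_onorm_inv_mult:
  fixes L :: "'a::euclidean_space \<Rightarrow>\<^sub>L 'a"
  assumes "bij (blinfun_apply L)"
  shows "norm u \<le> onorm (inv (blinfun_apply L)) * norm (L u)"
proof -
  have "inj (blinfun_apply L)" using assms bij_is_inj by blast
  then have "bounded_linear (inv (blinfun_apply L))"
    by (rule inj_linear_imp_inv_bounded_linear[OF blinfun.bounded_linear_right])
  from onorm[OF this, of "L u"] show ?thesis
    using \<open>inj (blinfun_apply L)\<close> by (simp add: inv_f_f)
qed

text \<open>Junk unless \<open>P\<close> is invertible; the lemmas below only use it for \<open>P\<close> bounded below.\<close>
definition blinfun_inv :: "('a::euclidean_space \<Rightarrow>\<^sub>L 'a) \<Rightarrow> 'a \<Rightarrow>\<^sub>L 'a" where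
  "blinfun_inv P = Blinfun (inv (blinfun_apply P))"

lemma
  fixes P :: "'a::euclidean_space \<Rightarrow>\<^sub>L 'a"
  assumes "0 < a" and bounded_below: "\<And>u. a * norm u \<le> norm (P u)"
  shows blinfun_inv_right: "P (blinfun_inv P z) = z"
    and blinfun_inv_left: "blinfun_inv P (P u) = u"
    and norm_blinfun_inv_le: "norm (blinfun_inv P) \<le> 1 / a"
proof -
  have inj: "inj (blinfun_apply P)"
  proof (rule injI)
    fix u v assume "P u = P v"
    then have "a * norm (u - v) \<le> 0" using bounded_below[of "u - v"] by (simp add: blinfun.diff_right)
    with \<open>0 < a\<close> show "u = v" by (simp add: mult_le_0_iff)
  qed
  have surj: "surj (blinfun_apply P)"
    using linear_injective_imp_surjective[OF bounded_linear.linear[OF blinfun.bounded_linear_right] inj] by simp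
  have inv: "blinfun_apply (blinfun_inv P) = inv (blinfun_apply P)"
    unfolding blinfun_inv_def
    using bounded_linear_Blinfun_apply[OF inj_linear_imp_inv_bounded_linear[OF blinfun.bounded_linear_right inj]] .
  show right: "P (blinfun_inv P z) = z" for z
    unfolding inv using surj by (rule surj_f_inv_f)
  show "blinfun_inv P (P u) = u"
    unfolding inv using inj by (rule inv_f_f)
  show "norm (blinfun_inv P) \<le> 1 / a"
  proof (rule norm_blinfun_bound)
    fix z show "norm (blinfun_inv P z) \<le> 1 / a * norm z"
      using bounded_below[of "blinfun_inv P z"] right \<open>0 < a\<close> by (simp add: field_simps)
  qed (use \<open>0 < a\<close> in simp)
qed

text \<open>The resolvent identity \<open>B\<^sub>1 - B\<^sub>2 = B\<^sub>1 (P\<^sub>2 - P\<^sub>1) B\<^sub>2\<close> for a left inverse \<open>B\<^sub>1\<close> of \<open>P\<^sub>1\<close>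
  and a right inverse \<open>B\<^sub>2\<close> of \<open>P\<^sub>2\<close>.\<close>
lemma norm_diff_inverses_le:
  fixes P1 P2 :: "'a::real_normed_vector \<Rightarrow>\<^sub>L 'b::real_normed_vector" and B1 B2 :: "'b \<Rightarrow>\<^sub>L 'a"
  assumes left: "\<And>u. B1 (P1 u) = u" and right: "\<And>z. P2 (B2 z) = z"
  shows "norm (B1 - B2) \<le> norm B1 * norm (P2 - P1) * norm B2"
proof -
  have "norm (B1 - B2) = norm (B1 o\<^sub>L (P2 - P1) o\<^sub>L B2)"
    by (rule arg_cong[where f = norm], rule blinfun_eqI)
      (simp add: blinfun.diff_left blinfun.diff_right left right)
  also have "\<dots> \<le> norm (B1 o\<^sub>L (P2 - P1)) * norm B2"
    by (rule norm_blinfun_compose)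
  also have "\<dots> \<le> norm B1 * norm (P2 - P1) * norm B2"
    by (intro mult_right_mono norm_blinfun_compose) simp
  finally show ?thesis .
qed

section \<open>Differentiating along a graph\<close>

lemma norm_fst_le_norm: "norm (fst z) \<le> norm z"
  by (cases z) (simp add: norm_fst_le)

lemma norm_graph_le:
  fixes A :: "'c::real_normed_vector \<Rightarrow>\<^sub>L 'd::real_normed_vector"
  shows "norm (u, A u) \<le> (1 + norm A) * norm u"
  using norm_Pair_le[of u "A u"] norm_blinfun[of A u] by (simp add: algebra_simps)

definition graph_deriv ::
    "('a::real_normed_vector \<times> 'b::real_normed_vector \<Rightarrow> ('a \<times> 'b) \<Rightarrow>\<^sub>L ('a \<times> 'b)) \<Rightarrow>
      ('a \<Rightarrow> 'b) \<Rightarrow> ('a \<Rightarrow> 'a \<Rightarrow>\<^sub>L 'b) \<Rightarrow> 'a \<Rightarrow> 'a \<Rightarrow>\<^sub>L 'a" where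
  "graph_deriv H' G G' v = Blinfun (\<lambda>u. fst (H' (v, G v) (u, G' v u)))"

context
  fixes H' :: "'a::real_normed_vector \<times> 'b::real_normed_vector \<Rightarrow> ('a \<times> 'b) \<Rightarrow>\<^sub>L ('a \<times> 'b)"
    and G' :: "'a \<Rightarrow> 'a \<Rightarrow>\<^sub>L 'b"
begin

lemma graph_deriv_apply: "graph_deriv H' G G' v u = fst (H' (v, G v) (u, G' v u))"
  unfolding graph_deriv_def
  by (subst bounded_linear_Blinfun_apply) (auto intro!: bounded_linear_intros)

lemma has_derivative_graph_comp:
  assumes "(G has_derivative G' v) (at v within S)"
    and "(H has_derivative H' (v, G v)) (at (v, G v) within (\<lambda>v. (v, G v)) ` S)"
  shows "((\<lambda>v. fst (H (v, G v))) has_derivative graph_deriv H' G G' v) (at v within S)"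
proof -
  have "((\<lambda>v. (v, G v)) has_derivative (\<lambda>u. (u, G' v u))) (at v within S)"
    by (intro has_derivative_Pair has_derivative_ident assms(1))
  from has_derivative_fst[OF diff_chain_within[OF this assms(2)]]
  show ?thesis by (simp add: o_def graph_deriv_apply[abs_def])
qed

lemma norm_graph_deriv_le: "norm (graph_deriv H' G G' v) \<le> norm (H' (v, G v)) * (1 + norm (G' v))"
proof (rule norm_blinfun_bound)
  fix u
  have "norm (graph_deriv H' G G' v u) \<le> norm (H' (v, G v) (u, G' v u))"
    unfolding graph_deriv_apply by (rule norm_fst_le_norm)
  also have "\<dots> \<le> norm (H' (v, G v)) * ((1 + norm (G' v)) * norm u)"
    by (rule order.trans[OF norm_blinfun mult_left_mono[OF norm_graph_le norm_ge_zero]])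
  finally show "norm (graph_deriv H' G G' v u) \<le> norm (H' (v, G v)) * (1 + norm (G' v)) * norm u"
    by (simp add: mult.assoc)
qed simp

lemma norm_graph_deriv_diff_le:
  "norm (graph_deriv H' G G' v - graph_deriv H' G G' w)
    \<le> norm (H' (v, G v) - H' (w, G w)) * (1 + norm (G' v)) + norm (H' (w, G w)) * norm (G' v - G' w)"
proof (rule norm_blinfun_bound)
  fix u
  define A B where "A = H' (v, G v)" and "B = H' (w, G w)"
  have "A x - B y = (A - B) x + B (x - y)" for x y
    by (simp add: blinfun.diff_left blinfun.diff_right)
  moreover have "(u, G' v u) - (u, G' w u) = (0, (G' v - G' w) u)"
    by (simp add: blinfun.diff_left)
  ultimately have split: "A (u, G' v u) - B (u, G' w u) = (A - B) (u, G' v u) + B (0, (G' v - G' w) u)"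
    by metis
  have "(graph_deriv H' G G' v - graph_deriv H' G G' w) u = fst (A (u, G' v u) - B (u, G' w u))"
    by (simp add: graph_deriv_apply A_def B_def blinfun.diff_left)
  then have "norm ((graph_deriv H' G G' v - graph_deriv H' G G' w) u)
      \<le> norm ((A - B) (u, G' v u)) + norm (B (0, (G' v - G' w) u))"
    unfolding split using norm_fst_le_norm norm_triangle_ineq order.trans by metis
  also have "\<dots> \<le> norm (A - B) * ((1 + norm (G' v)) * norm u) + norm B * (norm (G' v - G' w) * norm u)"
    by (intro add_mono order.trans[OF norm_blinfun] mult_left_mono norm_graph_le norm_ge_zero)
      (simp add: norm_blinfun)
  finally show "norm ((graph_deriv H' G G' v - graph_deriv H' G G' w) u)
      \<le> (norm (A - B) * (1 + norm (G' v)) + norm B * norm (G' v - G' w)) * norm u"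
    by (simp add: algebra_simps)
qed simp

end

lemma norm_fst_comp_zero_le:
  fixes H :: "'a::real_normed_vector \<times> 'b::real_normed_vector \<Rightarrow> 'a \<times> 'b"
  assumes "\<And>x. x \<in> cball 0 t \<Longrightarrow> (H has_derivative H' x) (at x within cball 0 t)"
    and "\<And>x. x \<in> cball 0 t \<Longrightarrow> onorm (H' x) \<le> b" and "norm y \<le> t"
  shows "norm (fst (H (0, y))) \<le> norm (H 0) + b * norm y"
proof -
  have "0 \<le> t" using assms(3) norm_ge_zero order.trans by blast
  then have "((0::'a), y) \<in> cball 0 t" "0 \<in> cball 0 t"
    using assms(3) by simp_all
  from differentiable_bound[OF convex_cball assms(1,2) this]
  have "norm (H (0, y)) \<le> norm (H 0) + b * norm y"
    using norm_triangle_ineq2[of "H (0, y)" "H 0"] by simp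
  then show ?thesis using norm_fst_le_norm[of "H (0, y)"] by linarith
qed

section \<open>Perturbations of expanding linear maps\<close>

locale expanding_perturbation =
  fixes L :: "'a::euclidean_space \<Rightarrow>\<^sub>L 'a" and h :: "'a \<Rightarrow> 'a" and h' :: "'a \<Rightarrow> 'a \<Rightarrow>\<^sub>L 'a"
    and a c C \<delta> p :: real
  assumes expanding: "\<And>u. a * norm u \<le> norm (L u)"
    and h_deriv: "\<And>v. v \<in> cball 0 p \<Longrightarrow> (h has_derivative h' v) (at v within cball 0 p)"
    and norm_h'_le: "\<And>v. v \<in> cball 0 p \<Longrightarrow> norm (h' v) \<le> c"
    and h'_hoelder: "\<And>v w. v \<in> cball 0 p \<Longrightarrow> w \<in> cball 0 p \<Longrightarrow>
      norm (h' v - h' w) \<le> C * norm (v - w) powr \<delta>"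
    and c_less_a: "c < a" and nonneg: "0 \<le> c" "0 \<le> C" "0 \<le> \<delta>" "0 \<le> p"
begin

abbreviation Psi :: "'a \<Rightarrow> 'a" where "Psi \<equiv> \<lambda>v. L v + h v"

abbreviation Phi :: "'a \<Rightarrow> 'a" where "Phi \<equiv> the_inv_into (cball 0 p) Psi"

definition Phi' :: "'a \<Rightarrow> 'a \<Rightarrow>\<^sub>L 'a" where "Phi' y = blinfun_inv (L + h' (Phi y))"

lemma gap_pos: "0 < a - c"
  using c_less_a by simp

lemma h_lipschitz: "v \<in> cball 0 p \<Longrightarrow> w \<in> cball 0 p \<Longrightarrow> norm (h v - h w) \<le> c * norm (v - w)"
  by (rule differentiable_bound[OF convex_cball h_deriv])
    (auto simp flip: norm_blinfun.rep_eq intro: norm_h'_le)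

lemma norm_Psi_diff_ge:
  assumes "v \<in> cball 0 p" "w \<in> cball 0 p"
  shows "(a - c) * norm (v - w) \<le> norm (Psi v - Psi w)"
proof -
  have "a * norm (v - w) - norm (h v - h w) \<le> norm (L (v - w) + (h v - h w))"
    using expanding[of "v - w"] norm_diff_ineq[of "L (v - w)" "h v - h w"] by linarith
  then show ?thesis
    using h_lipschitz[OF assms] by (simp add: blinfun.diff_right algebra_simps)
qed

lemma inj_on_Psi: "inj_on Psi (cball 0 p)"
proof (rule inj_onI)
  fix v w assume "v \<in> cball 0 p" "w \<in> cball 0 p" "Psi v = Psi w"
  then have "(a - c) * norm (v - w) \<le> 0" using norm_Psi_diff_ge by fastforce
  with gap_pos show "v = w" by (simp add: mult_le_0_iff)
qed

lemma Phi_Psi: "v \<in> cball 0 p \<Longrightarrow> Phi (Psi v) = v"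
  by (rule the_inv_into_f_f[OF inj_on_Psi])

lemma Psi_Phi: "y \<in> Psi ` cball 0 p \<Longrightarrow> Psi (Phi y) = y"
  by (rule f_the_inv_into_f[OF inj_on_Psi])

lemma Phi_in_cball: "y \<in> Psi ` cball 0 p \<Longrightarrow> Phi y \<in> cball 0 p"
  using Phi_Psi by auto

lemma norm_Phi_diff_le:
  assumes "y1 \<in> Psi ` cball 0 p" "y2 \<in> Psi ` cball 0 p"
  shows "norm (Phi y1 - Phi y2) \<le> norm (y1 - y2) / (a - c)"
proof -
  have "(a - c) * norm (Phi y1 - Phi y2) \<le> norm (y1 - y2)"
    using norm_Psi_diff_ge[OF Phi_in_cball[OF assms(1)] Phi_in_cball[OF assms(2)]]
    unfolding Psi_Phi[OF assms(1)] Psi_Phi[OF assms(2)] .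
  with gap_pos show ?thesis by (simp add: pos_le_divide_eq mult.commute)
qed

lemma derivative_bounded_below: "v \<in> cball 0 p \<Longrightarrow> (a - c) * norm u \<le> norm ((L + h' v) u)"
  using expanding[of u] norm_diff_ineq[of "L u" "h' v u"] norm_blinfun[of "h' v" u]
    mult_right_mono[OF norm_h'_le, of v "norm u"]
  by (simp add: plus_blinfun.rep_eq left_diff_distrib)

lemma has_derivative_Phi:
  assumes "y \<in> Psi ` cball 0 p"
  shows "(Phi has_derivative Phi' y) (at y within Psi ` cball 0 p)"
proof -
  obtain v where v: "v \<in> cball 0 p" "y = Psi v" using assms by blast
  have "(Psi has_derivative (\<lambda>u. L u + h' v u)) (at v within cball 0 p)"
    by (intro has_derivative_add bounded_linear.has_derivative[OF blinfun.bounded_linear_right]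
        h_deriv v has_derivative_ident)
  then have deriv: "(Psi has_derivative (L + h' v)) (at v within cball 0 p)"
    by (simp add: plus_blinfun.rep_eq)
  have lip: "norm (v - w) \<le> 1 / (a - c) * norm (Psi v - Psi w)"
    if "v \<in> cball 0 p" "w \<in> cball 0 p" for v w
    using norm_Psi_diff_ge[OF that] gap_pos by (simp add: pos_le_divide_eq mult.commute)
  have "(Phi has_derivative blinfun_inv (L + h' v)) (at (Psi v) within Psi ` cball 0 p)"
    by (rule has_derivative_inverse_within_lipschitz[where f = Psi and K = "cball 0 p",
          OF deriv v(1) blinfun.bounded_linear_right
          blinfun_inv_left[OF gap_pos derivative_bounded_below[OF v(1)]] Phi_Psi _ lip])
      (use gap_pos in simp_all)
  then show ?thesis
    unfolding Phi'_def v(2) Phi_Psi[OF v(1)] .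
qed

lemma norm_Phi'_le: "y \<in> Psi ` cball 0 p \<Longrightarrow> norm (Phi' y) \<le> 1 / (a - c)"
  unfolding Phi'_def
  by (rule norm_blinfun_inv_le[OF gap_pos derivative_bounded_below[OF Phi_in_cball]])

lemma norm_Phi'_diff_le:
  assumes "y1 \<in> Psi ` cball 0 p" "y2 \<in> Psi ` cball 0 p"
  shows "norm (Phi' y1 - Phi' y2) \<le> C / (a - c) powr (2 + \<delta>) * norm (y1 - y2) powr \<delta>"
proof -
  define v1 v2 where "v1 = Phi y1" and "v2 = Phi y2"
  have v: "v1 \<in> cball 0 p" "v2 \<in> cball 0 p" using Phi_in_cball assms by (auto simp: v1_def v2_def)
  have "norm (Phi' y1 - Phi' y2) \<le> norm (Phi' y1) * norm ((L + h' v2) - (L + h' v1)) * norm (Phi' y2)"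
    unfolding Phi'_def v1_def v2_def
    by (intro norm_diff_inverses_le blinfun_inv_left[OF gap_pos] blinfun_inv_right[OF gap_pos]
        derivative_bounded_below Phi_in_cball assms)
  also have "\<dots> \<le> 1 / (a - c) * (C * norm (v2 - v1) powr \<delta>) * (1 / (a - c))"
    using norm_Phi'_le[OF assms(1)] norm_Phi'_le[OF assms(2)] h'_hoelder[OF v(2,1)] gap_pos nonneg
    by (intro mult_mono) auto
  also have "\<dots> \<le> 1 / (a - c) * (C * (norm (y1 - y2) / (a - c)) powr \<delta>) * (1 / (a - c))"
    using norm_Phi_diff_le[OF assms(2,1)] gap_pos nonneg
    by (intro mult_right_mono mult_left_mono powr_mono2) (auto simp: v1_def v2_def norm_minus_commute)
  also have "\<dots> = C / (a - c) powr (2 + \<delta>) * norm (y1 - y2) powr \<delta>"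
    using gap_pos by (simp add: powr_divide powr_add field_simps power2_eq_square)
  finally show ?thesis .
qed

lemma c0_norm_Phi'_le: "c0_norm (Psi ` cball 0 p) Phi' \<le> ennreal (1 / (a - c))"
  by (rule c0_norm_leI) (rule norm_Phi'_le)

lemma hol_Phi'_le: "hol \<delta> (Psi ` cball 0 p) Phi' \<le> ennreal (C / (a - c) powr (2 + \<delta>))"
  by (rule hol_leI) (rule norm_Phi'_diff_le)

lemma norm_Phi_zero_le:
  assumes "0 \<in> Psi ` cball 0 p"
  shows "norm (Phi 0) \<le> norm (h 0) / (a - c)"
proof -
  have "0 \<in> cball (0::'a) p" using nonneg by simp
  then have "Phi (Psi 0) = 0" "Psi 0 \<in> Psi ` cball 0 p" by (rule Phi_Psi, rule imageI)
  then show ?thesis using norm_Phi_diff_le[OF assms \<open>Psi 0 \<in> Psi ` cball 0 p\<close>] by simp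
qed

lemma norm_inverse_L_le: "norm (blinfun_inv L z) \<le> norm z / a"
proof -
  have "0 < a" using gap_pos nonneg by simp
  then show ?thesis
    using norm_blinfun[of "blinfun_inv L" z] norm_blinfun_inv_le[OF \<open>0 < a\<close> expanding]
      mult_right_mono[of "norm (blinfun_inv L)" "1 / a" "norm z"]
    by simp
qed

text \<open>A point \<open>y\<close> is attained as the fixed point of the contraction \<open>v \<mapsto> L\<^sup>-\<^sup>1 (y - h v)\<close>.\<close>
lemma cball_subset_image_Psi:
  assumes "R + norm (h 0) + c * p \<le> a * p"
  shows "cball 0 R \<subseteq> Psi ` cball 0 p"
proof
  fix y :: 'a assume y: "y \<in> cball 0 R"
  have "0 < a" using gap_pos nonneg by simp
  have "0 \<in> cball (0::'a) p" using nonneg by simp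
  define T where "T v = blinfun_inv L (y - h v)" for v
  have "T ` cball 0 p \<subseteq> cball 0 p"
  proof clarify
    fix v :: 'a assume v: "v \<in> cball 0 p"
    have "norm (y - h v) \<le> R + norm (h 0) + c * p"
      using y h_lipschitz[OF v \<open>0 \<in> cball 0 p\<close>] mult_left_mono[of "norm v" p c] v nonneg
        norm_triangle_ineq4[of y "h v"] norm_triangle_ineq2[of "h v" "h 0"]
      by simp
    with assms \<open>0 < a\<close> have "norm (y - h v) / a \<le> p"
      by (simp add: pos_divide_le_eq mult.commute)
    with norm_inverse_L_le[of "y - h v"] show "T v \<in> cball 0 p" by (simp add: T_def)
  qed
  moreover have "dist (T v) (T w) \<le> c / a * dist v w" if "v \<in> cball 0 p" "w \<in> cball 0 p" for v w
  proof -
    have "dist (T v) (T w) \<le> norm (h w - h v) / a"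
      using norm_inverse_L_le[of "h w - h v"] by (simp add: T_def dist_norm blinfun.diff_right)
    also have "\<dots> \<le> c * norm (w - v) / a"
      using h_lipschitz[OF that(2,1)] \<open>0 < a\<close> by (simp add: divide_right_mono)
    finally show ?thesis by (simp add: dist_norm norm_minus_commute)
  qed
  ultimately obtain v where v: "v \<in> cball 0 p" "T v = v"
    using Banach_fix[of "cball 0 p" "c / a" T] \<open>0 \<in> cball 0 p\<close> c_less_a nonneg \<open>0 < a\<close>
    by (auto simp: complete_eq_closed)
  then have "Psi v = y"
    using blinfun_inv_right[OF \<open>0 < a\<close> expanding, of "y - h v"] by (simp add: T_def)
  with v(1) show "y \<in> Psi ` cball 0 p" by blast
qed

end

section \<open>Admissible graphs\<close>

lemma admissible_uD:
  assumes "admissible_u \<delta> p \<eta> G G'"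
  shows admissible_u_deriv: "\<And>v. v \<in> cball 0 p \<Longrightarrow> (G has_derivative G' v) (at v within cball 0 p)"
    and admissible_u_zero: "norm (G 0) \<le> \<eta> / 1000"
    and admissible_u_deriv_le: "\<And>v. v \<in> cball 0 p \<Longrightarrow> norm (G' v) \<le> 1/2"
    and admissible_u_hoelder: "\<And>v w. v \<in> cball 0 p \<Longrightarrow> w \<in> cball 0 p \<Longrightarrow>
      norm (G' v - G' w) \<le> 1/2 * norm (v - w) powr \<delta>"
    and admissible_u_lipschitz: "\<And>v w. v \<in> cball 0 p \<Longrightarrow> w \<in> cball 0 p \<Longrightarrow>
      norm (G v - G w) \<le> 1/2 * norm (v - w)"
proof -
  have sum: "c0_norm (cball 0 p) G' + hol \<delta> (cball 0 p) G' \<le> ennreal (1/2)"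
    and deriv: "\<And>v. v \<in> cball 0 p \<Longrightarrow> (G has_derivative G' v) (at v within cball 0 p)"
    and "norm (G 0) \<le> 10 powr (-3) * \<eta>"
    using assms unfolding admissible_u_def C1_holder_def by auto
  then show "norm (G 0) \<le> \<eta> / 1000" by (simp add: powr_minus)
  show "(G has_derivative G' v) (at v within cball 0 p)" if "v \<in> cball 0 p" for v
    using deriv that .
  show le: "norm (G' v) \<le> 1/2" if "v \<in> cball 0 p" for v
    using c0_norm_le_imp_norm_le[OF order.trans[OF add_increasing2[OF zero_le order_refl] sum] that]
    by simp
  show "norm (G' v - G' w) \<le> 1/2 * norm (v - w) powr \<delta>" if "v \<in> cball 0 p" "w \<in> cball 0 p" for v w
    using hol_le_imp_norm_diff_le[OF order.trans[OF add_increasing[OF zero_le order_refl] sum] that]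
    by simp
  have "onorm (G' v) \<le> 1/2" if "v \<in> cball 0 p" for v
    using le[OF that] by (simp add: norm_blinfun.rep_eq)
  then show "norm (G v - G w) \<le> 1/2 * norm (v - w)" if "v \<in> cball 0 p" "w \<in> cball 0 p" for v w
    using differentiable_bound[OF convex_cball deriv _ that] by blast
qed

lemma admissible_u_graph_in_cball:
  assumes "admissible_u \<delta> p \<eta> G G'" "\<eta> \<le> p" "v \<in> cball 0 p"
  shows "(v, G v) \<in> cball 0 (2 * p)"
proof -
  have "0 \<le> p" using assms(3) by (auto intro: order.trans[OF norm_ge_zero])
  then have "norm (G v) \<le> norm (G 0) + 1/2 * norm v"
    using admissible_u_lipschitz[OF assms(1) assms(3), of 0] norm_triangle_ineq2[of "G v" "G 0"] by simp
  then have "norm (v, G v) \<le> 2 * p"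
    using norm_Pair_le[of v "G v"] admissible_u_zero[OF assms(1)] assms(2) mem_cball_0[of v p] assms(3)
      norm_ge_zero[of v]
    by linarith
  then show ?thesis by simp
qed

context
  fixes G :: "'a::euclidean_space \<Rightarrow> 'b::euclidean_space" and G' :: "'a \<Rightarrow> 'a \<Rightarrow>\<^sub>L 'b"
    and H :: "'a \<times> 'b \<Rightarrow> 'a \<times> 'b" and H' :: "'a \<times> 'b \<Rightarrow> ('a \<times> 'b) \<Rightarrow>\<^sub>L ('a \<times> 'b)"
    and U :: "('a \<times> 'b) set" and \<delta> p \<eta> \<beta> \<epsilon> :: real
  assumes adm: "admissible_u \<delta> p \<eta> G G'"
    and H_deriv: "\<And>x. x \<in> U \<Longrightarrow> (H has_derivative H' x) (at x within U)"
    and graph_in_U: "\<And>v. v \<in> cball 0 p \<Longrightarrow> (v, G v) \<in> U"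
    and H'_le: "\<And>v. v \<in> cball 0 p \<Longrightarrow> norm (H' (v, G v)) \<le> \<beta>"
    and H'_hoelder: "\<And>x y. x \<in> U \<Longrightarrow> y \<in> U \<Longrightarrow> norm (H' x - H' y) \<le> \<epsilon> * norm (x - y) powr \<delta>"
    and \<delta>: "0 \<le> \<delta>" "\<delta> \<le> 1" and "0 \<le> \<epsilon>"
begin

lemma has_derivative_graph_map:
  "v \<in> cball 0 p \<Longrightarrow>
    ((\<lambda>v. fst (H (v, G v))) has_derivative graph_deriv H' G G' v) (at v within cball 0 p)"
  using graph_in_U
  by (intro has_derivative_graph_comp admissible_u_deriv[OF adm] has_derivative_subset[OF H_deriv]) auto

lemma norm_graph_map_deriv_le:
  assumes "v \<in> cball 0 p"
  shows "norm (graph_deriv H' G G' v) \<le> 3/2 * \<beta>"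
proof -
  have "norm (graph_deriv H' G G' v) \<le> norm (H' (v, G v)) * (1 + norm (G' v))"
    by (rule norm_graph_deriv_le)
  also have "\<dots> \<le> \<beta> * (3/2)"
    using H'_le[OF assms] admissible_u_deriv_le[OF adm assms] order.trans[OF norm_ge_zero H'_le[OF assms]]
    by (intro mult_mono) auto
  finally show ?thesis by simp
qed

lemma norm_graph_map_deriv_diff_le:
  assumes v: "v \<in> cball 0 p" and w: "w \<in> cball 0 p"
  shows "norm (graph_deriv H' G G' v - graph_deriv H' G G' w) \<le> (9/4 * \<epsilon> + \<beta> / 2) * norm (v - w) powr \<delta>"
proof -
  have "norm ((v, G v) - (w, G w)) \<le> 3/2 * norm (v - w)"
    using norm_Pair_le[of "v - w" "G v - G w"] admissible_u_lipschitz[OF adm v w] by simp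
  then have "norm ((v, G v) - (w, G w)) powr \<delta> \<le> (3/2 * norm (v - w)) powr \<delta>"
    by (rule powr_mono2[OF \<delta>(1) norm_ge_zero])
  also have "\<dots> = (3/2) powr \<delta> * norm (v - w) powr \<delta>"
    using powr_mult[of "3/2" "norm (v - w)" \<delta>] by simp
  also have "\<dots> \<le> 3/2 * norm (v - w) powr \<delta>"
    using powr_mono[of \<delta> 1 "3/2::real"] \<delta> by (intro mult_right_mono) auto
  finally have "norm (H' (v, G v) - H' (w, G w)) \<le> \<epsilon> * (3/2 * norm (v - w) powr \<delta>)"
    using H'_hoelder[OF graph_in_U[OF v] graph_in_U[OF w]] \<open>0 \<le> \<epsilon>\<close>
    by (meson mult_left_mono order.trans)
  then have "norm (H' (v, G v) - H' (w, G w)) * (1 + norm (G' v)) \<le> \<epsilon> * (3/2 * norm (v - w) powr \<delta>) * (3/2)"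
    using admissible_u_deriv_le[OF adm v] \<open>0 \<le> \<epsilon>\<close> by (intro mult_mono) auto
  moreover have "norm (H' (w, G w)) * norm (G' v - G' w) \<le> \<beta> * (1/2 * norm (v - w) powr \<delta>)"
    using H'_le[OF w] admissible_u_hoelder[OF adm v w] order.trans[OF norm_ge_zero H'_le[OF w]]
    by (intro mult_mono) auto
  ultimately show ?thesis
    using norm_graph_deriv_diff_le[of H' G G' v w] by (simp add: algebra_simps)
qed

end

lemma exp_neg_add_three_sq_le:
  fixes s :: real
  assumes "0 \<le> s" "s \<le> 1/10"
  shows "exp (- s) + 3 * s\<^sup>2 \<le> 1"
proof -
  have "exp (- s) * (1 + s) \<le> 1"
    using exp_ge_add_one_self[of s] by (simp add: exp_minus field_simps)
  moreover have "3 * s * (1 + s) \<le> 3 * (1/10) * (1 + 1/10)"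
    using assms by (intro mult_mono) auto
  then have "s * (3 * s * (1 + s)) \<le> s * 1"
    using assms by (intro mult_left_mono) auto
  ultimately have "(exp (- s) + 3 * s\<^sup>2) * (1 + s) \<le> 1 * (1 + s)"
    by (simp add: algebra_simps power2_eq_square)
  moreover have "0 < 1 + s" using assms by simp
  ultimately show ?thesis
    by (rule mult_right_le_imp_le)
qed

lemma divide_gap_less:
  fixes \<epsilon> A t :: real
  assumes "0 < \<epsilon>" "\<epsilon> < 1/100" "1 \<le> A" "0 \<le> t" "t \<le> 3"
  shows "(1 + t * \<epsilon>) / (A - \<epsilon>\<^sup>2) < (1 + (t + 1/2) * \<epsilon>) / A"
proof -
  have "\<epsilon> * \<epsilon> < 1/100 * \<epsilon>"
    using assms by (intro mult_strict_right_mono) auto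
  moreover have "(t + 1/2) * \<epsilon> * \<epsilon> \<le> 4 * 1 * \<epsilon>"
    using assms by (intro mult_mono) auto
  moreover have "(t + 1/2) * \<epsilon> * \<epsilon> * \<epsilon> \<le> 4 * (\<epsilon> * \<epsilon>)"
    using calculation(2) assms by (simp add: mult_right_mono)
  moreover have "\<epsilon> \<le> A * \<epsilon>"
    using assms by simp
  ultimately have "0 < A * \<epsilon> / 2 - \<epsilon> * \<epsilon> - (t + 1/2) * \<epsilon> * \<epsilon> * \<epsilon>"
    using \<open>0 < \<epsilon>\<close> by linarith
  also have "\<dots> = (A - \<epsilon>\<^sup>2) * (1 + (t + 1/2) * \<epsilon>) - A * (1 + t * \<epsilon>)"
    by (simp add: field_simps power2_eq_square)
  finally have "A * (1 + t * \<epsilon>) < (A - \<epsilon>\<^sup>2) * (1 + (t + 1/2) * \<epsilon>)"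
    by simp
  moreover have "0 < A - \<epsilon>\<^sup>2"
    using \<open>\<epsilon> * \<epsilon> < 1/100 * \<epsilon>\<close> assms unfolding power2_eq_square by linarith
  ultimately show ?thesis
    using assms by (simp add: field_simps)
qed

section \<open>The graph transform\<close>

locale graph_transform =
  fixes \<delta> \<kappa> \<epsilon> r \<eta> p :: real
    and D1 :: "'a::euclidean_space \<Rightarrow>\<^sub>L 'a"
    and H :: "'a \<times> 'b::euclidean_space \<Rightarrow> 'a \<times> 'b" and H' :: "'a \<times> 'b \<Rightarrow> ('a \<times> 'b) \<Rightarrow>\<^sub>L ('a \<times> 'b)"
    and G :: "'a \<Rightarrow> 'b" and G' :: "'a \<Rightarrow> 'a \<Rightarrow>\<^sub>L 'b"
  assumes \<delta>: "0 < \<delta>" "\<delta> < 1" and \<epsilon>: "0 < \<epsilon>" "\<epsilon> < 1/100" "\<epsilon> < \<kappa>"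
    and radii: "0 < r" "2 * r powr \<delta> < \<epsilon>" "0 < \<eta>" "\<eta> \<le> p" "p \<le> r / 2"
    and D1: "bij (blinfun_apply D1)" "onorm (inv (blinfun_apply D1)) < exp (- \<kappa>)"
    and H: "C1_holder \<delta> (cball 0 r) H H'" and H_zero: "norm (H 0) < \<epsilon> * \<eta>"
    and H'_c0: "\<And>t. t \<in> {\<eta>..2*p} \<Longrightarrow> c0_norm (cball 0 t) H' < ennreal (\<epsilon> * t powr \<delta>)"
    and H'_hol: "hol \<delta> (cball 0 r) H' < ennreal \<epsilon>"
    and adm: "admissible_u \<delta> p \<eta> G G'"
begin

abbreviation h :: "'a \<Rightarrow> 'a" where "h \<equiv> \<lambda>v. fst (H (v, G v))"

lemma eps_sq_le: "\<epsilon>\<^sup>2 \<le> \<epsilon>"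
  using mult_right_mono[of \<epsilon> 1 \<epsilon>] \<epsilon> by (simp add: power2_eq_square)

lemma one_add_eps_le_exp: "1 + \<epsilon> \<le> exp \<kappa>"
  using \<epsilon> exp_ge_add_one_self[of \<kappa>] by linarith

lemma D1_expanding: "exp \<kappa> * norm u \<le> norm (D1 u)"
proof -
  have "norm u \<le> exp (- \<kappa>) * norm (D1 u)"
    using norm_le_onorm_inv_mult[OF D1(1), of u] mult_right_mono[OF less_imp_le[OF D1(2)] norm_ge_zero]
    by (rule order.trans)
  then show ?thesis by (simp add: exp_minus field_simps)
qed

lemma H_deriv: "x \<in> cball 0 r \<Longrightarrow> (H has_derivative H' x) (at x within cball 0 r)"
  using H unfolding C1_holder_def by blast

lemma powr_delta_less: "0 \<le> t \<Longrightarrow> t \<le> r \<Longrightarrow> t powr \<delta> < \<epsilon> / 2"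
  using powr_mono2[of \<delta> t r] \<delta> radii by simp

lemma norm_H'_le: "t \<in> {\<eta>..2*p} \<Longrightarrow> x \<in> cball 0 t \<Longrightarrow> norm (H' x) \<le> \<epsilon> * t powr \<delta>"
  using c0_norm_less_imp_norm_less[OF H'_c0] by (meson less_imp_le)

lemma norm_H'_graph_le:
  assumes "v \<in> cball 0 p"
  shows "norm (H' (v, G v)) \<le> \<epsilon>\<^sup>2 / 2"
proof -
  have "norm (H' (v, G v)) \<le> \<epsilon> * (2 * p) powr \<delta>"
    using norm_H'_le admissible_u_graph_in_cball[OF adm radii(4) assms] radii by simp
  also have "\<dots> \<le> \<epsilon> * (\<epsilon> / 2)"
    using powr_delta_less[of "2 * p"] radii \<epsilon> by (intro mult_left_mono) auto
  finally show ?thesis by (simp add: power2_eq_square)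
qed

lemma graph_expanding_perturbation:
  "expanding_perturbation D1 h (graph_deriv H' G G') (exp \<kappa>) (\<epsilon>\<^sup>2) (5/2 * \<epsilon>) \<delta> p"
proof -
  have graph_in_r: "(v, G v) \<in> cball 0 r" if "v \<in> cball 0 p" for v
    using admissible_u_graph_in_cball[OF adm radii(4) that] radii by simp
  have H'_hoelder: "norm (H' x - H' y) \<le> \<epsilon> * norm (x - y) powr \<delta>" if "x \<in> cball 0 r" "y \<in> cball 0 r" for x y
    using hol_less_imp_norm_diff_le[OF H'_hol that] .
  note graph_map = adm H_deriv graph_in_r norm_H'_graph_le H'_hoelder less_imp_le[OF \<delta>(1)]
    less_imp_le[OF \<delta>(2)] less_imp_le[OF \<epsilon>(1)]
  show ?thesis
  proof
    show "exp \<kappa> * norm u \<le> norm (D1 u)" for u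
      by (rule D1_expanding)
    show "(h has_derivative graph_deriv H' G G' v) (at v within cball 0 p)" if "v \<in> cball 0 p" for v
      by (rule has_derivative_graph_map[OF graph_map that])
    show "norm (graph_deriv H' G G' v) \<le> \<epsilon>\<^sup>2" if "v \<in> cball 0 p" for v
      using norm_graph_map_deriv_le[OF graph_map that] zero_le_power2[of \<epsilon>] by linarith
    show "norm (graph_deriv H' G G' v - graph_deriv H' G G' w) \<le> 5/2 * \<epsilon> * norm (v - w) powr \<delta>"
      if "v \<in> cball 0 p" "w \<in> cball 0 p" for v w
    proof -
      have "9/4 * \<epsilon> + \<epsilon>\<^sup>2 / 2 / 2 \<le> 5/2 * \<epsilon>"
        using eps_sq_le \<epsilon> by linarith
      then show ?thesis
        using norm_graph_map_deriv_diff_le[OF graph_map that] by (meson mult_right_mono powr_ge_zero order.trans)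
    qed
    show "\<epsilon>\<^sup>2 < exp \<kappa>"
      using eps_sq_le one_add_eps_le_exp by linarith
  qed (use \<delta> \<epsilon> radii in auto)
qed

lemma norm_h_zero_less: "norm (h 0) < 2 * \<epsilon> * \<eta>"
proof -
  have "cball 0 \<eta> \<subseteq> cball (0::'a \<times> 'b) r" using radii by auto
  then have deriv: "(H has_derivative H' x) (at x within cball 0 \<eta>)" if "x \<in> cball 0 \<eta>" for x
    using has_derivative_subset[OF H_deriv] that by blast
  have bound: "onorm (H' x) \<le> \<epsilon> * \<eta> powr \<delta>" if "x \<in> cball 0 \<eta>" for x
    using norm_H'_le[OF _ that] radii by (simp add: norm_blinfun.rep_eq)
  have G0: "norm (G 0) \<le> \<eta> / 1000" by (rule admissible_u_zero[OF adm])
  have "\<epsilon> * \<eta> powr \<delta> * norm (G 0) \<le> \<epsilon> * 1 * \<eta>"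
    using powr_delta_less[of \<eta>] G0 radii \<epsilon> by (intro mult_mono) auto
  moreover have "norm (h 0) \<le> norm (H 0) + \<epsilon> * \<eta> powr \<delta> * norm (G 0)"
    using G0 radii by (intro norm_fst_comp_zero_le[OF deriv bound]) auto
  ultimately show ?thesis using H_zero by simp
qed

sublocale expanding_perturbation D1 h "graph_deriv H' G G'" "exp \<kappa>" "\<epsilon>\<^sup>2" "5/2 * \<epsilon>" \<delta> p
  by (rule graph_expanding_perturbation)

lemma one_le_gap: "1 \<le> exp \<kappa> - \<epsilon>\<^sup>2"
  using one_add_eps_le_exp eps_sq_le by linarith

lemma inverse_gap_less: "1 / (exp \<kappa> - \<epsilon>\<^sup>2) < exp (- \<kappa> + \<epsilon>)"
proof -
  have "1 / (exp \<kappa> - \<epsilon>\<^sup>2) < (1 + 1/2 * \<epsilon>) / exp \<kappa>"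
    using divide_gap_less[of \<epsilon> "exp \<kappa>" 0] \<epsilon> one_add_eps_le_exp by simp
  also have "\<dots> \<le> exp \<epsilon> / exp \<kappa>"
    using exp_ge_add_one_self[of \<epsilon>] \<epsilon> by (intro divide_right_mono) (linarith, simp)
  finally show ?thesis by (simp add: exp_diff)
qed

lemma cball_subset_image: "cball 0 (exp (\<kappa> - sqrt \<epsilon>) * p) \<subseteq> Psi ` cball 0 p"
proof (rule cball_subset_image_Psi)
  have "sqrt \<epsilon> \<le> 1/10"
    using \<epsilon> by (intro real_le_lsqrt) (auto simp: power2_eq_square)
  then have "exp (- sqrt \<epsilon>) + 3 * \<epsilon> \<le> 1"
    using exp_neg_add_three_sq_le[of "sqrt \<epsilon>"] \<epsilon> by simp
  then have "exp \<kappa> * exp (- sqrt \<epsilon>) + exp \<kappa> * (3 * \<epsilon>) \<le> exp \<kappa> * 1"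
    unfolding distrib_left[symmetric] by (intro mult_left_mono) simp_all
  moreover have "3 * \<epsilon> \<le> exp \<kappa> * (3 * \<epsilon>)"
    using mult_right_mono[of 1 "exp \<kappa>" "3 * \<epsilon>"] one_add_eps_le_exp \<epsilon> by simp
  ultimately have "(exp (\<kappa> - sqrt \<epsilon>) + 3 * \<epsilon>) * p \<le> exp \<kappa> * p"
    using radii by (intro mult_right_mono) (simp_all flip: exp_add)
  moreover have "norm (h 0) + \<epsilon>\<^sup>2 * p \<le> 3 * \<epsilon> * p"
  proof -
    have "\<epsilon>\<^sup>2 * p \<le> \<epsilon> * p" using eps_sq_le radii by (intro mult_right_mono) auto
    moreover have "\<epsilon> * \<eta> \<le> \<epsilon> * p" using \<epsilon> radii by (intro mult_left_mono) auto
    ultimately show ?thesis using norm_h_zero_less by linarith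
  qed
  ultimately show "exp (\<kappa> - sqrt \<epsilon>) * p + norm (h 0) + \<epsilon>\<^sup>2 * p \<le> exp \<kappa> * p"
    unfolding distrib_right by linarith
qed

lemma c0_norm_Phi'_less: "c0_norm (Psi ` cball 0 p) Phi' < ennreal (exp (- \<kappa> + \<epsilon>))"
  using c0_norm_Phi'_le ennreal_lessI[OF exp_gt_zero inverse_gap_less] by order

lemma norm_Phi_zero_less: "norm (Phi 0) < 2 * \<epsilon> * \<eta> * exp (- \<kappa> + \<epsilon>)"
proof -
  have "0 \<in> Psi ` cball 0 p" using cball_subset_image radii by force
  then have "norm (Phi 0) \<le> norm (h 0) / (exp \<kappa> - \<epsilon>\<^sup>2)"
    by (rule norm_Phi_zero_le)
  also have "\<dots> < 2 * \<epsilon> * \<eta> * (1 / (exp \<kappa> - \<epsilon>\<^sup>2))"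
    using norm_h_zero_less one_le_gap by (simp add: divide_strict_right_mono)
  also have "\<dots> \<le> 2 * \<epsilon> * \<eta> * exp (- \<kappa> + \<epsilon>)"
    using inverse_gap_less \<epsilon> radii by (intro mult_left_mono) auto
  finally show ?thesis .
qed

lemma cdelta_norm_Phi'_less: "cdelta_norm \<delta> (Psi ` cball 0 p) Phi' < ennreal (exp (- \<kappa> + 3 * \<epsilon>))"
proof -
  define m where "m = exp \<kappa> - \<epsilon>\<^sup>2"
  have "1 \<le> m" unfolding m_def by (rule one_le_gap)
  have "5/2 * \<epsilon> / m powr (2 + \<delta>) \<le> 5/2 * \<epsilon> / m powr 1"
    using \<open>1 \<le> m\<close> \<delta> \<epsilon> by (intro divide_left_mono powr_mono) auto
  then have "1 / m + 5/2 * \<epsilon> / m powr (2 + \<delta>) \<le> (1 + 5/2 * \<epsilon>) / m"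
    using \<open>1 \<le> m\<close> by (simp add: add_divide_distrib)
  also have "\<dots> < (1 + 3 * \<epsilon>) / exp \<kappa>"
    using divide_gap_less[of \<epsilon> "exp \<kappa>" "5/2"] \<epsilon> one_add_eps_le_exp by (simp add: m_def)
  also have "\<dots> \<le> exp (3 * \<epsilon>) / exp \<kappa>"
    using exp_ge_add_one_self[of "3 * \<epsilon>"] by (intro divide_right_mono) (linarith, simp)
  finally have bound: "1 / m + 5/2 * \<epsilon> / m powr (2 + \<delta>) < exp (- \<kappa> + 3 * \<epsilon>)"
    by (simp add: exp_diff)
  have "cdelta_norm \<delta> (Psi ` cball 0 p) Phi' \<le> ennreal (1 / m) + ennreal (5/2 * \<epsilon> / m powr (2 + \<delta>))"
    unfolding cdelta_norm_def m_def by (intro add_mono c0_norm_Phi'_le hol_Phi'_le)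
  also have "\<dots> = ennreal (1 / m + 5/2 * \<epsilon> / m powr (2 + \<delta>))"
    using \<open>1 \<le> m\<close> \<epsilon> by simp
  also have "\<dots> < ennreal (exp (- \<kappa> + 3 * \<epsilon>))"
    using bound by (simp add: ennreal_lessI)
  finally show ?thesis .
qed

lemma inverse_graph_map_estimates:
  "let \<Psi> = (\<lambda>v. blinfun_apply D1 v + fst (H (v, G v)));
       \<Phi> = the_inv_into (cball 0 p) \<Psi>
   in inj_on \<Psi> (cball 0 p) \<and>
      cball 0 (exp (\<kappa> - sqrt \<epsilon>) * p) \<subseteq> \<Psi> ` cball 0 p \<and>
      (\<exists>\<Phi>'. (\<forall>y\<in>\<Psi> ` cball 0 p.
                (\<Phi> has_derivative blinfun_apply (\<Phi>' y)) (at y within \<Psi> ` cball 0 p)) \<and>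
             c0_norm (\<Psi> ` cball 0 p) \<Phi>' < ennreal (exp (-\<kappa> + \<epsilon>)) \<and>
             norm (\<Phi> 0) < 2 * \<epsilon> * \<eta> * exp (-\<kappa> + \<epsilon>) \<and>
             cdelta_norm \<delta> (\<Psi> ` cball 0 p) \<Phi>' < ennreal (exp (-\<kappa> + 3 * \<epsilon>)))"
  unfolding Let_def
  by (intro conjI inj_on_Psi cball_subset_image exI[of _ Phi'] ballI has_derivative_Phi
      c0_norm_Phi'_less norm_Phi_zero_less cdelta_norm_Phi'_less)

end

theorem lemmaA1:
  fixes \<delta> \<kappa> :: real
  assumes "0 < \<delta>" "\<delta> < 1" "0 < \<kappa>"
  shows "\<exists>\<epsilon>0>0. \<forall>\<epsilon>. 0 < \<epsilon> \<and> \<epsilon> < \<epsilon>0 \<longrightarrow>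
    (\<forall>(r::real) (\<eta>::real) (p::real)
       (D1 :: 'a::euclidean_space \<Rightarrow>\<^sub>L 'a) (D2 :: 'b::euclidean_space \<Rightarrow>\<^sub>L 'b)
       (H :: 'a \<times> 'b \<Rightarrow> 'a \<times> 'b) (H' :: 'a \<times> 'b \<Rightarrow> ('a \<times> 'b) \<Rightarrow>\<^sub>L ('a \<times> 'b))
       (G :: 'a \<Rightarrow> 'b) (G' :: 'a \<Rightarrow> 'a \<Rightarrow>\<^sub>L 'b).
      0 < r \<and> 2 * r powr \<delta> < \<epsilon> \<and> 0 < \<eta> \<and> \<eta> \<le> p \<and> p \<le> r / 2 \<and>
      \<comment> \<open>(GT2)\<close>
      bij (blinfun_apply D1) \<and> onorm (inv (blinfun_apply D1)) < exp (-\<kappa>) \<and>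
      bij (blinfun_apply D2) \<and> norm D2 < exp (-\<kappa>) \<and>
      \<comment> \<open>(GT3)\<close>
      C1_holder \<delta> (cball 0 r) H H' \<and>
      norm (H 0) < \<epsilon> * \<eta> \<and>
      (\<forall>t\<in>{\<eta>..2*p}. c0_norm (cball 0 t) H' < ennreal (\<epsilon> * t powr \<delta>)) \<and>
      hol \<delta> (cball 0 r) H' < ennreal \<epsilon> \<and>
      \<comment> \<open>admissible graph\<close>
      admissible_u \<delta> p \<eta> G G'
      \<longrightarrow>
      (let \<Psi> = (\<lambda>v. blinfun_apply D1 v + fst (H (v, G v)));
           \<Phi> = the_inv_into (cball 0 p) \<Psi>
       in inj_on \<Psi> (cball 0 p) \<and>
          cball 0 (exp (\<kappa> - sqrt \<epsilon>) * p) \<subseteq> \<Psi> ` cball 0 p \<and>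
          (\<exists>\<Phi>'. (\<forall>y\<in>\<Psi> ` cball 0 p.
                    (\<Phi> has_derivative blinfun_apply (\<Phi>' y)) (at y within \<Psi> ` cball 0 p)) \<and>
                 c0_norm (\<Psi> ` cball 0 p) \<Phi>' < ennreal (exp (-\<kappa> + \<epsilon>)) \<and>
                 norm (\<Phi> 0) < 2 * \<epsilon> * \<eta> * exp (-\<kappa> + \<epsilon>) \<and>
                 cdelta_norm \<delta> (\<Psi> ` cball 0 p) \<Phi>' < ennreal (exp (-\<kappa> + 3 * \<epsilon>)))))"
proof (intro exI[of _ "min (1/100) \<kappa>"] conjI allI impI)
  show "0 < min (1/100) \<kappa>" using assms by simp
qed (elim conjE, rule graph_transform.inverse_graph_map_estimates, unfold_locales, use assms in auto)

end
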